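(* Let $n\ge 2$ and $k\ge 1$ be integers and put $t=\lceil n/(k+1)\rceil$. Let $A$ be the $(kt+1)\times n$ matrix with entries $A_{ij}=1$ if $i\le j\le \min(i+t-1,n)$ and $A_{ij}=0$ otherwise, for $1\le i\le kt+1$ and $1\le j\le n$. Then $A$ identifies all $k$-sparse vectors in $\mathbb{R}^n$. The support of every nonzero row of $A$ is a set of consecutive nodes, so $A$ is a feasible measurement matrix both for the line network $L_n$ and for the ring network $C_n$. Consequently $M^{L_n}_{k,n}\le k\lceil n/(k+1)\rceil+1$ and $M^{C_n}_{k,n}\le k\lceil n/(k+1)\rceil+1$.
   Context: Let $G=(V,E)$ be a simple undirected graph with $V=\{1,\dots,n\}$. A vector $x\in\mathbb{R}^n$ is associated with $G$, its $j$-th entry sitting at node $j$. A measurement matrix for $G$ is a matrix $A\in\{0,1\}^{m\times n}$ in which every nonzero row has a support $\{j: A_{ij}=1\}$ that induces a connected subgraph of $G$. A vector is $k$-sparse if it has at most $k$ nonzero entries. A matrix $A$ identifies all $k$-sparse vectors if $Ax_1\neq Ax_2$ for every two distinct $k$-sparse vectors $x_1,x_2$. $M^G_{k,n}$ is the minimum number of rows of a measurement matrix for $G$ that identifies all $k$-sparse vectors. The line network $L_n$ has edges $\{i,i+1\}$ for $1\le i\le n-1$. The ring network $C_n$ (with $n\ge 3$) additionally has the edge $\{n,1\}$. *)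

theory Defs
  imports Complex_Main
begin

text \<open>Graphs on the vertex set {1..n} are given by an edge relation on nat.
  Vectors in R^n are functions nat => real vanishing outside {1..n};
  an m x n matrix is a function nat => nat => real, only the entries with
  row index in {1..m} and column index in {1..n} being relevant.\<close>

definition line_graph :: "nat \<Rightarrow> nat \<Rightarrow> nat \<Rightarrow> bool" where
  "line_graph n i j \<longleftrightarrow> i \<in> {1..n} \<and> j \<in> {1..n} \<and> (j = i + 1 \<or> i = j + 1)"

definition ring_graph :: "nat \<Rightarrow> nat \<Rightarrow> nat \<Rightarrow> bool" where
  "ring_graph n i j \<longleftrightarrow> line_graph n i j \<or> (i = n \<and> j = 1) \<or> (i = 1 \<and> j = n)"

definition induces_connected :: "(nat \<Rightarrow> nat \<Rightarrow> bool) \<Rightarrow> nat set \<Rightarrow> bool" where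
  "induces_connected E S \<longleftrightarrow>
     (\<forall>u\<in>S. \<forall>v\<in>S. (\<lambda>x y. x \<in> S \<and> y \<in> S \<and> E x y)\<^sup>*\<^sup>* u v)"

definition row_support :: "nat \<Rightarrow> (nat \<Rightarrow> nat \<Rightarrow> real) \<Rightarrow> nat \<Rightarrow> nat set" where
  "row_support n A i = {j \<in> {1..n}. A i j = 1}"

definition measurement_matrix ::
  "(nat \<Rightarrow> nat \<Rightarrow> bool) \<Rightarrow> nat \<Rightarrow> nat \<Rightarrow> (nat \<Rightarrow> nat \<Rightarrow> real) \<Rightarrow> bool" where
  "measurement_matrix E n m A \<longleftrightarrow>
     (\<forall>i\<in>{1..m}. \<forall>j\<in>{1..n}. A i j = 0 \<or> A i j = 1) \<and>
     (\<forall>i\<in>{1..m}. row_support n A i \<noteq> {} \<longrightarrow> induces_connected E (row_support n A i))"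

definition rvec :: "nat \<Rightarrow> (nat \<Rightarrow> real) set" where
  "rvec n = {x. \<forall>j. j \<notin> {1..n} \<longrightarrow> x j = 0}"

definition sparse :: "nat \<Rightarrow> nat \<Rightarrow> (nat \<Rightarrow> real) \<Rightarrow> bool" where
  "sparse n k x \<longleftrightarrow> card {j \<in> {1..n}. x j \<noteq> 0} \<le> k"

definition mat_vec :: "nat \<Rightarrow> (nat \<Rightarrow> nat \<Rightarrow> real) \<Rightarrow> (nat \<Rightarrow> real) \<Rightarrow> nat \<Rightarrow> real" where
  "mat_vec n A x i = (\<Sum>j = 1..n. A i j * x j)"

definition identifies :: "nat \<Rightarrow> nat \<Rightarrow> nat \<Rightarrow> (nat \<Rightarrow> nat \<Rightarrow> real) \<Rightarrow> bool" where
  "identifies n m k A \<longleftrightarrow>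
     (\<forall>x1\<in>rvec n. \<forall>x2\<in>rvec n. sparse n k x1 \<longrightarrow> sparse n k x2 \<longrightarrow> x1 \<noteq> x2 \<longrightarrow>
        (\<exists>i\<in>{1..m}. mat_vec n A x1 i \<noteq> mat_vec n A x2 i))"

definition M_num :: "(nat \<Rightarrow> nat \<Rightarrow> bool) \<Rightarrow> nat \<Rightarrow> nat \<Rightarrow> nat" where
  "M_num E k n = (LEAST m. \<exists>A. measurement_matrix E n m A \<and> identifies n m k A)"

end

theory Submission
  imports Defs
begin

(*
  Row i of the matrix measures the window sum x_i + ... + x_{i+t-1}
  (truncated at n).  If two k-sparse vectors have equal measurements, their
  difference d has vanishing window sums S_1, ..., S_{kt+1}.  Subtracting
  consecutive window sums gives d_i = d_{i+t} for i <= kt, so d is t-periodic on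
  {1..(k+1)t}, which contains {1..n} because t = ceil(n/(k+1)).  If d is nonzero,
  some residue class mod t carries a nonzero value; since S_1 = 0 a second residue
  class does too, so d has at least 2(k+1) nonzero entries.  But the difference of
  two k-sparse vectors has at most 2k, a contradiction.
*)

definition window_matrix :: "nat \<Rightarrow> nat \<Rightarrow> nat \<Rightarrow> nat \<Rightarrow> real" where
  "window_matrix n t i j = (if i \<le> j \<and> j \<le> min (i + t - 1) n then 1 else 0)"

lemma ceiling_window_length:
  fixes n k t :: nat
  assumes "n \<ge> 1" and t: "t = nat \<lceil>real n / real (k + 1)\<rceil>"
  shows "t \<ge> 1" and "n \<le> (k + 1) * t"
proof -
  have pos: "real n / real (k + 1) > 0" using assms(1) by simp
  then have ceil_pos: "\<lceil>real n / real (k + 1)\<rceil> \<ge> 1" by (simp add: one_le_ceiling)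
  then show "t \<ge> 1" using t by linarith
  have real_t: "real t = of_int \<lceil>real n / real (k + 1)\<rceil>" using ceil_pos t by simp
  have "real n / real (k + 1) \<le> real t" unfolding real_t by (rule le_of_int_ceiling)
  then have "real n \<le> real t * real (k + 1)"
    by (simp add: divide_le_eq del: of_nat_Suc)
  then show "n \<le> (k + 1) * t" by (metis of_nat_le_iff of_nat_mult mult.commute)
qed

lemma mat_vec_window_matrix:
  assumes "t \<ge> 1" and "x \<in> rvec n"
  shows "mat_vec n (window_matrix n t) x i = sum x {i..<i + t}"
proof -
  have "mat_vec n (window_matrix n t) x i = (\<Sum>j = 1..n. if j \<in> {i..<i + t} then x j else 0)"
    unfolding mat_vec_def window_matrix_def by (rule sum.cong) (use assms(1) in auto)
  also have "\<dots> = sum x ({i..<i + t} \<inter> {1..n})" by (simp add: sum.inter_restrict Int_commute)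
  also have "\<dots> = (\<Sum>j\<in>{i..<i + t}. if j \<in> {1..n} then x j else 0)" by (simp add: sum.inter_restrict)
  also have "\<dots> = sum x {i..<i + t}" by (rule sum.cong) (use assms(2) in \<open>auto simp: rvec_def\<close>)
  finally show ?thesis .
qed

lemma window_sums_shift:
  fixes d :: "nat \<Rightarrow> real"
  assumes "t \<ge> 1" and "sum d {i..<i + t} = 0" and "sum d {Suc i..<Suc i + t} = 0"
  shows "d i = d (i + t)"
proof -
  have "sum d {i..<i + t} = d i + sum d {Suc i..<i + t}"
    using assms(1) by (simp add: sum.atLeast_Suc_lessThan)
  moreover have "sum d {Suc i..<Suc i + t} = sum d {Suc i..<i + t} + d (i + t)"
    using assms(1) by (simp add: sum.atLeastLessThan_Suc)
  ultimately show ?thesis using assms(2,3) by simp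
qed

lemma window_sums_periodic:
  fixes d :: "nat \<Rightarrow> real"
  assumes t: "t \<ge> 1"
    and zero: "\<And>i. i \<in> {1..k * t + 1} \<Longrightarrow> sum d {i..<i + t} = 0"
    and r: "1 \<le> r" "r \<le> t" and "m \<le> k"
  shows "d (r + m * t) = d r"
  using \<open>m \<le> k\<close>
proof (induction m)
  case 0
  then show ?case by simp
next
  case (Suc m)
  have "r + m * t \<le> k * t"
    using r Suc.prems mult_le_mono1[of "Suc m" k t] by simp
  then have "d (r + m * t) = d (r + m * t + t)"
    using r by (intro window_sums_shift[OF t] zero) auto
  then show ?case using Suc by (simp add: ac_simps)
qed

lemma residue_unique:
  fixes r r' a b t :: nat
  assumes "r \<in> {1..t}" "r' \<in> {1..t}" "r + a * t = r' + b * t"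
  shows "r = r'"
proof -
  have "(r - 1 + a * t) mod t = (r' - 1 + b * t) mod t"
    using assms by (simp add: add.commute add_diff_assoc2)
  moreover have "(r - 1) mod t = r - 1" "(r' - 1) mod t = r' - 1" using assms(1,2) by auto
  ultimately have "r - 1 = r' - 1" by simp
  then show ?thesis using assms(1,2) by auto
qed

lemma residue_decomposition:
  fixes j k t :: nat
  assumes "t \<ge> 1" and "1 \<le> j" and "j \<le> (k + 1) * t"
  obtains r m where "r \<in> {1..t}" and "m \<le> k" and "j = r + m * t"
proof -
  have j: "j = ((j - 1) mod t + 1) + (j - 1) div t * t"
    using div_mult_mod_eq[of "j - 1" t] assms(2) by linarith
  have r: "(j - 1) mod t + 1 \<in> {1..t}" using assms(1) by (simp add: Suc_leI)
  have "j - 1 < (k + 1) * t" using assms(2,3) by linarith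
  then have "(j - 1) div t < k + 1" by (rule less_mult_imp_div_less)
  then show thesis using that[OF r _ j] by simp
qed

text \<open>Main counting step: a nonzero vector supported in {1..(k+1)t} whose window sums
  S_1..S_{kt+1} all vanish has at least 2(k+1) nonzero entries, namely two full
  residue classes mod t.\<close>
lemma zero_window_sums_support:
  fixes d :: "nat \<Rightarrow> real"
  assumes t: "t \<ge> 1" and n: "n \<le> (k + 1) * t"
    and out: "\<And>j. j \<notin> {1..n} \<Longrightarrow> d j = 0"
    and zero: "\<And>i. i \<in> {1..k * t + 1} \<Longrightarrow> sum d {i..<i + t} = 0"
    and nonzero: "d j \<noteq> 0"
  shows "2 * (k + 1) \<le> card {j \<in> {1..n}. d j \<noteq> 0}"
proof -
  have periodic: "d (s + m * t) = d s" if "s \<in> {1..t}" "m \<le> k" for s m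
    using window_sums_periodic[of t k d s m, OF t zero] that by auto
  have "j \<in> {1..n}" using out nonzero by blast
  then obtain r m where r: "r \<in> {1..t}" and "m \<le> k" and "j = r + m * t"
    using residue_decomposition[OF t, of j k] n by auto
  then have dr: "d r \<noteq> 0" using periodic[OF r \<open>m \<le> k\<close>] nonzero by simp
  obtain r' where r': "r' \<in> {1..t}" "r' \<noteq> r" "d r' \<noteq> 0"
  proof (rule ccontr)
    assume "\<not> thesis"
    then have others: "\<forall>r'\<in>{1..t} - {r}. d r' = 0" using that by blast
    have "sum d {1..<1 + t} = sum d {1..t}" by (rule sum.cong) auto
    also have "\<dots> = d r" using r others by (simp add: sum.remove)
    finally show False using zero[of 1] dr by simp
  qed
  define residue_class where "residue_class = (\<lambda>s. (\<lambda>m. s + m * t) ` {..k})"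
  have fin: "finite (residue_class s)" for s
    unfolding residue_class_def by simp
  have card_residue_class: "card (residue_class s) = k + 1" for s
    unfolding residue_class_def using t by (subst card_image) (auto simp: inj_on_def)
  have "residue_class r \<inter> residue_class r' = {}"
    unfolding residue_class_def using residue_unique[OF r r'(1)] r'(2) by auto
  then have "card (residue_class r \<union> residue_class r') = 2 * (k + 1)"
    using card_Un_disjoint[OF fin fin] card_residue_class by simp
  moreover have "residue_class r \<union> residue_class r' \<subseteq> {j \<in> {1..n}. d j \<noteq> 0}"
  proof
    fix p assume "p \<in> residue_class r \<union> residue_class r'"
    then obtain s m where "s \<in> {r, r'}" "m \<le> k" "p = s + m * t"
      unfolding residue_class_def by blast
    then have "d p \<noteq> 0" using periodic r r' dr by auto
    then show "p \<in> {j \<in> {1..n}. d j \<noteq> 0}" using out by blast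
  qed
  then have "card (residue_class r \<union> residue_class r') \<le> card {j \<in> {1..n}. d j \<noteq> 0}"
    by (intro card_mono) auto
  ultimately show ?thesis by simp
qed

lemma window_matrix_identifies:
  assumes t: "t \<ge> 1" and n: "n \<le> (k + 1) * t"
  shows "identifies n (k * t + 1) k (window_matrix n t)"
  unfolding identifies_def
proof (intro ballI impI)
  fix x1 x2
  assume x1: "x1 \<in> rvec n" and x2: "x2 \<in> rvec n" and "sparse n k x1" "sparse n k x2" "x1 \<noteq> x2"
  show "\<exists>i\<in>{1..k * t + 1}. mat_vec n (window_matrix n t) x1 i \<noteq> mat_vec n (window_matrix n t) x2 i"
  proof (rule ccontr)
    assume same: "\<not> ?thesis"
    define d where "d = (\<lambda>j. x1 j - x2 j)"
    have zero: "sum d {i..<i + t} = 0" if "i \<in> {1..k * t + 1}" for i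
      using that same mat_vec_window_matrix[OF t x1] mat_vec_window_matrix[OF t x2]
      by (simp add: d_def sum_subtractf)
    have out: "d j = 0" if "j \<notin> {1..n}" for j
      using x1 x2 that by (simp add: rvec_def d_def)
    obtain j where "d j \<noteq> 0" using \<open>x1 \<noteq> x2\<close> by (auto simp: d_def)
    then have "2 * (k + 1) \<le> card {j \<in> {1..n}. d j \<noteq> 0}"
      using zero_window_sums_support[OF t n out zero] by blast
    also have "\<dots> \<le> card ({j \<in> {1..n}. x1 j \<noteq> 0} \<union> {j \<in> {1..n}. x2 j \<noteq> 0})"
      by (rule card_mono) (auto simp: d_def)
    also have "\<dots> \<le> card {j \<in> {1..n}. x1 j \<noteq> 0} + card {j \<in> {1..n}. x2 j \<noteq> 0}"
      by (rule card_Un_le)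
    also have "\<dots> \<le> 2 * k" using \<open>sparse n k x1\<close> \<open>sparse n k x2\<close> by (simp add: sparse_def)
    finally show False by simp
  qed
qed

lemma row_support_window_matrix:
  assumes "i \<ge> 1"
  shows "row_support n (window_matrix n t) i = {i..min (i + t - 1) n}"
  using assms by (auto simp: row_support_def window_matrix_def)

lemma interval_induces_connected:
  fixes E :: "nat \<Rightarrow> nat \<Rightarrow> bool"
  assumes E: "\<And>x. 1 \<le> x \<Longrightarrow> x + 1 \<le> n \<Longrightarrow> E x (x + 1) \<and> E (x + 1) x"
    and ab: "1 \<le> a" "b \<le> n"
  shows "induces_connected E {a..b}"
proof -
  let ?R = "\<lambda>x y. x \<in> {a..b} \<and> y \<in> {a..b} \<and> E x y"
  have walk: "?R\<^sup>*\<^sup>* u (u + d) \<and> ?R\<^sup>*\<^sup>* (u + d) u" if "u \<in> {a..b}" "u + d \<in> {a..b}" for u d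
    using that
  proof (induction d)
    case 0
    then show ?case by simp
  next
    case (Suc d)
    then have IH: "?R\<^sup>*\<^sup>* u (u + d) \<and> ?R\<^sup>*\<^sup>* (u + d) u" by auto
    have step: "?R (u + d) (u + Suc d)" "?R (u + Suc d) (u + d)"
      using Suc.prems E[of "u + d"] ab by auto
    show ?case
      using rtranclp.rtrancl_into_rtrancl[OF conjunct1[OF IH] step(1)]
        converse_rtranclp_into_rtranclp[OF step(2) conjunct2[OF IH]] by blast
  qed
  show ?thesis unfolding induces_connected_def
  proof (intro ballI)
    fix u v assume "u \<in> {a..b}" "v \<in> {a..b}"
    then show "?R\<^sup>*\<^sup>* u v"
      using walk[of u "v - u"] walk[of v "u - v"] by (cases "u \<le> v") auto
  qed
qed

lemma window_matrix_measurement_matrix: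
  fixes E :: "nat \<Rightarrow> nat \<Rightarrow> bool"
  assumes E: "\<And>x. 1 \<le> x \<Longrightarrow> x + 1 \<le> n \<Longrightarrow> E x (x + 1) \<and> E (x + 1) x"
  shows "measurement_matrix E n m (window_matrix n t)"
  unfolding measurement_matrix_def
proof (intro conjI ballI impI)
  fix i j
  show "window_matrix n t i j = 0 \<or> window_matrix n t i j = 1"
    by (simp add: window_matrix_def)
next
  fix i assume "i \<in> {1..m}"
  then show "induces_connected E (row_support n (window_matrix n t) i)"
    using row_support_window_matrix interval_induces_connected[of n E, OF E] by simp
qed

lemma M_num_le:
  assumes "measurement_matrix E n m A" and "identifies n m k A"
  shows "M_num E k n \<le> m"
  unfolding M_num_def by (rule Least_le) (use assms in blast)

theorem theorem1:
  fixes n k t :: nat and A :: "nat \<Rightarrow> nat \<Rightarrow> real"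
  assumes "n \<ge> 2" and "k \<ge> 1"
    and "t = nat \<lceil>real n / real (k + 1)\<rceil>"
    and "A = (\<lambda>i j. if i \<le> j \<and> j \<le> min (i + t - 1) n then 1 else 0)"
  shows "identifies n (k * t + 1) k A
    \<and> (\<forall>i\<in>{1..k * t + 1}. \<exists>a b. row_support n A i = {a..b})
    \<and> measurement_matrix (line_graph n) n (k * t + 1) A
    \<and> (n \<ge> 3 \<longrightarrow> measurement_matrix (ring_graph n) n (k * t + 1) A)
    \<and> M_num (line_graph n) k n \<le> k * t + 1
    \<and> (n \<ge> 3 \<longrightarrow> M_num (ring_graph n) k n \<le> k * t + 1)"
proof -
  have A: "A = window_matrix n t"
    using assms(4) by (simp add: fun_eq_iff window_matrix_def)
  have "t \<ge> 1" and "n \<le> (k + 1) * t"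
    using ceiling_window_length assms(1,3) by auto
  then have ident: "identifies n (k * t + 1) k A"
    unfolding A by (rule window_matrix_identifies)
  have line: "measurement_matrix (line_graph n) n (k * t + 1) A"
    unfolding A by (rule window_matrix_measurement_matrix) (auto simp: line_graph_def)
  have ring: "measurement_matrix (ring_graph n) n (k * t + 1) A"
    unfolding A by (rule window_matrix_measurement_matrix)
      (auto simp: ring_graph_def line_graph_def)
  have "\<forall>i\<in>{1..k * t + 1}. \<exists>a b. row_support n A i = {a..b}"
    unfolding A using row_support_window_matrix by auto
  then show ?thesis
    using ident line ring M_num_le[OF line ident] M_num_le[OF ring ident] by blast
qed

end
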